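(* Let $\mathbb{F}$ be an algebraically closed field of characteristic zero and $J_2=E_{12}+E_{23}$. Let $\underline{A}=(J_2,A_2,A_3)$ and $\underline{B}=(0,B_2,B_3)$ be elements of $\mathcal{N}_3^3$ such that $f(\underline{A})=f(\underline{B})$ for all $f\in S_{3,3}$. Then $f(\underline{A})=f(\underline{B})$ for all $f\in P_{3,3}$.
   Context: $E_{ij}$ is the $3\times3$ matrix unit. $\mathcal{N}_3^3$ is the set of triples of nilpotent $3\times3$ matrices over $\mathbb{F}$. $\mathrm{tr}(Y_{i_1}\cdots Y_{i_r})$ denotes the function $\underline{A}\mapsto\mathrm{tr}(A_{i_1}\cdots A_{i_r})$. $S_{3,3}$ is the set consisting of: $\mathrm{tr}(Y_iY_j),\ \mathrm{tr}(Y_i^2Y_j),\ \mathrm{tr}(Y_iY_j^2),\ \mathrm{tr}(Y_i^2Y_j^2),\ \mathrm{tr}(Y_i^2Y_j^2Y_iY_j)$ for $1\le i<j\le3$; $\mathrm{tr}(Y_1Y_2Y_3)$, $\mathrm{tr}(Y_1Y_3Y_2)$; $\mathrm{tr}(Y_i^2Y_jY_k)$ for $\{i,j,k\}=\{1,2,3\}$; $\mathrm{tr}(Y_1^2Y_2Y_1Y_3)$, $\mathrm{tr}(Y_2^2Y_1Y_2Y_3)$, $\mathrm{tr}(Y_3^2Y_1Y_3Y_2)$. $P_{3,3}=S_{3,3}\sqcup P'_{3,3}$, where $P'_{3,3}$ consists of $\mathrm{tr}(Y_i^2Y_j^2Y_k)$ and $\mathrm{tr}(Y_i^2Y_j^2Y_iY_k)$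 for $\{i,j,k\}=\{1,2,3\}$, and $\mathrm{tr}(Y_1^2Y_2^2Y_3^2)$. *)

theory Defs
  imports "HOL-Analysis.Analysis" "HOL-Computational_Algebra.Polynomial"
begin

type_synonym 'a mat3 = "'a^3^3"

definition E :: "3 \<Rightarrow> 3 \<Rightarrow> 'a::semiring_1 mat3" where
  "E i j = (\<chi> r c. if r = i \<and> c = j then 1 else 0)"

definition J2 :: "'a::semiring_1 mat3" where
  "J2 = E 1 2 + E 2 3"

definition mat_pow :: "'a::semiring_1 mat3 \<Rightarrow> nat \<Rightarrow> 'a mat3" where
  "mat_pow A k = (((**) A) ^^ k) (mat 1)"

definition nilpotent3 :: "'a::semiring_1 mat3 \<Rightarrow> bool" where
  "nilpotent3 A \<longleftrightarrow> (\<exists>k. mat_pow A k = 0)"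

definition in_N33 :: "'a::semiring_1 mat3 list \<Rightarrow> bool" where
  "in_N33 As \<longleftrightarrow> length As = 3 \<and> (\<forall>M\<in>set As. nilpotent3 M)"

text \<open>tr(Y_{i_1}...Y_{i_r}) evaluated at a triple As = [A_1,A_2,A_3]; word indices are 1,2,3.\<close>
definition tr_word :: "nat list \<Rightarrow> 'a::semiring_1 mat3 list \<Rightarrow> 'a" where
  "tr_word w As = trace (foldr (\<lambda>i M. (As ! (i - 1)) ** M) w (mat 1))"

definition S33 :: "nat list set" where
  "S33 =
     {[i,j] | i j. 1 \<le> i \<and> i < j \<and> j \<le> 3}
   \<union> {[i,i,j] | i j. 1 \<le> i \<and> i < j \<and> j \<le> 3}
   \<union> {[i,j,j] | i j. 1 \<le> i \<and> i < j \<and> j \<le> 3}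
   \<union> {[i,i,j,j] | i j. 1 \<le> i \<and> i < j \<and> j \<le> 3}
   \<union> {[i,i,j,j,i,j] | i j. 1 \<le> i \<and> i < j \<and> j \<le> 3}
   \<union> {[1,2,3], [1,3,2]}
   \<union> {[i,i,j,k] | i j k. {i,j,k} = {1,2,3::nat}}
   \<union> {[1,1,2,1,3], [2,2,1,2,3], [3,3,1,3,2]}"

definition P33' :: "nat list set" where
  "P33' =
     {[i,i,j,j,k] | i j k. {i,j,k} = {1,2,3::nat}}
   \<union> {[i,i,j,j,i,k] | i j k. {i,j,k} = {1,2,3::nat}}
   \<union> {[1,1,2,2,3,3]}"

definition P33 :: "nat list set" where
  "P33 = S33 \<union> P33'"

end

theory Submission
  imports Defs
begin

text \<open>Every word of P'_{3,3} contains the letter 1, so its trace vanishes on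
  (0, B_2, B_3). Hence on (J_2, A_2, A_3) the words Y_1 Y_k, Y_1^2 Y_k and Y_1^2 Y_k^2
  of S_{3,3} (k = 2, 3) have trace 0; for X = A_k these traces are X_21 + X_32,
  X_31 and (X^2)_31, which is -X_21^2 once the first two vanish. So A_2 and A_3
  are upper triangular, and a product of upper triangular matrices with the
  strictly upper triangular factor J_2 among them has trace 0.\<close>

definition upper_triangular :: "('n \<Rightarrow> 'b::linorder) \<Rightarrow> 'a::zero^'n^'n \<Rightarrow> bool" where
  "upper_triangular r M \<longleftrightarrow> (\<forall>i j. r j < r i \<longrightarrow> M$i$j = 0)"

definition strictly_upper_triangular :: "('n \<Rightarrow> 'b::linorder) \<Rightarrow> 'a::zero^'n^'n \<Rightarrow> bool" where
  "strictly_upper_triangular r M \<longleftrightarrow> (\<forall>i j. r j \<le> r i \<longrightarrow> M$i$j = 0)"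

lemma strictly_upper_triangular_imp_upper_triangular:
  "strictly_upper_triangular r M \<Longrightarrow> upper_triangular r M"
  by (simp add: strictly_upper_triangular_def upper_triangular_def)

lemma upper_triangular_mat_1: "upper_triangular r (mat 1 :: 'a::zero_neq_one^'n^'n)"
  by (auto simp: upper_triangular_def mat_def)

lemma upper_triangular_mult:
  fixes M N :: "'a::semiring_1^'n::finite^'n"
  assumes "upper_triangular r M" "upper_triangular r N"
  shows "upper_triangular r (M ** N)"
  unfolding upper_triangular_def matrix_matrix_mult_def
proof (intro allI impI)
  fix i j assume "r j < r i"
  then have "M$i$k * N$k$j = 0" for k
    using assms by (cases "r k < r i") (auto simp: upper_triangular_def)
  then show "(\<chi> i j. \<Sum>k\<in>UNIV. M$i$k * N$k$j) $ i $ j = 0" by simp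
qed

lemma strictly_upper_triangular_mult_left:
  fixes M N :: "'a::semiring_1^'n::finite^'n"
  assumes "strictly_upper_triangular r M" "upper_triangular r N"
  shows "strictly_upper_triangular r (M ** N)"
  unfolding strictly_upper_triangular_def matrix_matrix_mult_def
proof (intro allI impI)
  fix i j assume "r j \<le> r i"
  then have "M$i$k * N$k$j = 0" for k
    using assms by (cases "r k \<le> r i") (auto simp: upper_triangular_def strictly_upper_triangular_def)
  then show "(\<chi> i j. \<Sum>k\<in>UNIV. M$i$k * N$k$j) $ i $ j = 0" by simp
qed

lemma strictly_upper_triangular_mult_right:
  fixes M N :: "'a::semiring_1^'n::finite^'n"
  assumes "upper_triangular r M" "strictly_upper_triangular r N"
  shows "strictly_upper_triangular r (M ** N)"
  unfolding strictly_upper_triangular_def matrix_matrix_mult_def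
proof (intro allI impI)
  fix i j assume "r j \<le> r i"
  then have "M$i$k * N$k$j = 0" for k
    using assms by (cases "r k < r i") (auto simp: upper_triangular_def strictly_upper_triangular_def)
  then show "(\<chi> i j. \<Sum>k\<in>UNIV. M$i$k * N$k$j) $ i $ j = 0" by simp
qed

lemma trace_strictly_upper_triangular:
  "strictly_upper_triangular r M \<Longrightarrow> trace M = 0"
  by (simp add: strictly_upper_triangular_def trace_def)

definition word_product :: "nat list \<Rightarrow> ('a::semiring_1^'n^'n) list \<Rightarrow> 'a^'n^'n" where
  "word_product w As = foldr (\<lambda>i M. As ! (i - 1) ** M) w (mat 1)"

lemma word_product_Nil [simp]: "word_product [] As = mat 1"
  by (simp add: word_product_def)

lemma word_product_Cons [simp]: "word_product (i # w) As = As ! (i - 1) ** word_product w As"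
  by (simp add: word_product_def)

lemma tr_word_eq_trace_word_product: "tr_word w As = trace (word_product w As)"
  by (simp add: tr_word_def word_product_def)

lemma word_product_eq_0:
  "i \<in> set w \<Longrightarrow> As ! (i - 1) = 0 \<Longrightarrow> word_product w As = 0"
  by (induction w) auto

lemma upper_triangular_word_product:
  fixes As :: "('a::semiring_1^'n::finite^'n) list"
  assumes "\<forall>i\<in>set w. upper_triangular r (As ! (i - 1))"
  shows "upper_triangular r (word_product w As)"
  using assms by (induction w) (simp_all add: upper_triangular_mat_1 upper_triangular_mult)

lemma strictly_upper_triangular_word_product:
  fixes As :: "('a::semiring_1^'n::finite^'n) list"
  assumes "\<forall>i\<in>set w. upper_triangular r (As ! (i - 1))"
    and "i \<in> set w" "strictly_upper_triangular r (As ! (i - 1))"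
  shows "strictly_upper_triangular r (word_product w As)"
  using assms
proof (induction w)
  case (Cons k w)
  show ?case
  proof (cases "i \<in> set w")
    case True
    with Cons show ?thesis by (simp add: strictly_upper_triangular_mult_right)
  next
    case False
    with Cons.prems have "k = i" by simp
    with Cons.prems show ?thesis
      by (simp add: strictly_upper_triangular_mult_left upper_triangular_word_product)
  qed
qed simp

lemma tr_word_eq_0_if_Y1_zero: "1 \<in> set w \<Longrightarrow> tr_word w (0 # Bs) = 0"
  by (simp add: tr_word_eq_trace_word_product word_product_eq_0 trace_def)

text \<open>In the numeral type \<open>3\<close> we have \<open>3 = 0 < 1 < 2\<close>, so triangularity
  is taken with respect to an explicit ranking of the indices.\<close>

definition index3 :: "3 \<Rightarrow> nat" where
  "index3 i = (if i = 1 then 1 else if i = 2 then 2 else 3)"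

lemma upper_triangular_index3_iff:
  "upper_triangular index3 M \<longleftrightarrow> M$2$1 = 0 \<and> M$3$1 = 0 \<and> M$3$2 = 0"
  by (auto simp: upper_triangular_def forall_3 index3_def)

lemma strictly_upper_triangular_J2: "strictly_upper_triangular index3 J2"
  by (simp add: strictly_upper_triangular_def forall_3 index3_def J2_def E_def)

lemma trace_J2_mult: "trace (J2 ** M) = M$2$1 + M$3$2"
  by (simp add: trace_def sum_3 matrix_matrix_mult_def J2_def E_def)

lemma trace_J2_J2_mult: "trace (J2 ** (J2 ** M)) = M$3$1"
  by (simp add: trace_def sum_3 matrix_matrix_mult_def J2_def E_def)

lemma upper_triangular_if_J2_traces_vanish:
  fixes X :: "'a::idom mat3"
  assumes "trace (J2 ** X) = 0" "trace (J2 ** (J2 ** X)) = 0" "trace (J2 ** (J2 ** (X ** X))) = 0"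
  shows "upper_triangular index3 X"
proof -
  have "X$3$2 = - X$2$1"
    using assms(1) by (simp add: trace_J2_mult add_eq_0_iff)
  moreover have "X$3$1 = 0"
    using assms(2) by (simp add: trace_J2_J2_mult)
  moreover have "X$3$1 * X$1$1 + X$3$2 * X$2$1 + X$3$3 * X$3$1 = 0"
    using assms(3) unfolding trace_J2_J2_mult by (simp add: matrix_matrix_mult_def sum_3)
  ultimately show ?thesis
    by (simp add: upper_triangular_index3_iff)
qed

lemma upper_triangular_if_tr_words_vanish:
  fixes As :: "'a::idom mat3 list"
  assumes "As ! 0 = J2"
    and "tr_word [1,k] As = 0" "tr_word [1,1,k] As = 0" "tr_word [1,1,k,k] As = 0"
  shows "upper_triangular index3 (As ! (k - 1))"
  using assms by (intro upper_triangular_if_J2_traces_vanish) (simp_all add: tr_word_eq_trace_word_product)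

lemma S33_contains_1k_words:
  assumes "1 < k" "k \<le> 3"
  shows "[1,k] \<in> S33" "[1,1,k] \<in> S33" "[1,1,k,k] \<in> S33"
  using assms unfolding S33_def by (blast intro: order_refl)+

lemma set_P33'_word:
  assumes "w \<in> P33'"
  shows "set w = {1,2,3}"
  using assms unfolding P33'_def
proof (elim UnE)
  assume "w \<in> {[i,i,j,j,k] |i j k. {i,j,k} = {1,2,3::nat}}"
  then obtain i j k where "w = [i,i,j,j,k]" and ijk: "{i,j,k} = {1,2,3::nat}" by blast
  then have "set w = {i,j,k}" by auto
  then show ?thesis using ijk by (rule trans)
next
  assume "w \<in> {[i,i,j,j,i,k] |i j k. {i,j,k} = {1,2,3::nat}}"
  then obtain i j k where "w = [i,i,j,j,i,k]" and ijk: "{i,j,k} = {1,2,3::nat}" by blast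
  then have "set w = {i,j,k}" by auto
  then show ?thesis using ijk by (rule trans)
qed auto

lemma upper_triangular_letters_if_S33_traces_vanish:
  fixes A2 A3 :: "'a::idom mat3"
  assumes "\<And>v. v \<in> S33 \<Longrightarrow> 1 \<in> set v \<Longrightarrow> tr_word v [J2, A2, A3] = 0"
    and "k \<in> {1,2,3}"
  shows "upper_triangular index3 ([J2, A2, A3] ! (k - 1))"
proof (cases "k = 1")
  case True
  then show ?thesis
    using strictly_upper_triangular_imp_upper_triangular[OF strictly_upper_triangular_J2] by simp
next
  case False
  with assms(2) have "1 < k" "k \<le> 3" by auto
  then show ?thesis
    by (intro upper_triangular_if_tr_words_vanish assms(1) S33_contains_1k_words) simp_all
qed

theorem lemma8p2:
  fixes A2 A3 B2 B3 :: "'a::{alg_closed_field, field_char_0} mat3"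
  assumes "in_N33 [J2, A2, A3]"
    and "in_N33 [0, B2, B3]"
    and "\<forall>w\<in>S33. tr_word w [J2, A2, A3] = tr_word w [0, B2, B3]"
  shows "\<forall>w\<in>P33. tr_word w [J2, A2, A3] = tr_word w [0, B2, B3]"
proof
  fix w assume "w \<in> P33"
  show "tr_word w [J2, A2, A3] = tr_word w [0, B2, B3]"
  proof (cases "w \<in> S33")
    case True
    with assms(3) show ?thesis by blast
  next
    case False
    with \<open>w \<in> P33\<close> have letters: "set w = {1,2,3}"
      by (simp add: P33_def set_P33'_word)
    have "tr_word v [J2, A2, A3] = 0" if "v \<in> S33" "1 \<in> set v" for v
      using assms(3) that by (simp add: tr_word_eq_0_if_Y1_zero)
    then have "\<forall>k\<in>set w. upper_triangular index3 ([J2, A2, A3] ! (k - 1))"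
      using letters upper_triangular_letters_if_S33_traces_vanish by blast
    then have "strictly_upper_triangular index3 (word_product w [J2, A2, A3])"
      using letters strictly_upper_triangular_J2
      by (intro strictly_upper_triangular_word_product[where i = 1]) auto
    then have "tr_word w [J2, A2, A3] = 0"
      by (simp add: tr_word_eq_trace_word_product trace_strictly_upper_triangular)
    moreover have "tr_word w [0, B2, B3] = 0"
      using letters by (simp add: tr_word_eq_0_if_Y1_zero)
    ultimately show ?thesis by simp
  qed
qed

end
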